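(* Let $\nu\in\mathcal H^+$ and let $S:\mathcal G\to\mathbb R_+$ satisfy $S(0)=0$, $S(g)\le S(g+h)$ for all $g,h\in\mathcal G$, $|S(g)-S(h)|\le K\|g-h\|_{\mathrm{Was}}$ for all $g,h$, and additionally $$\inf\{S(\delta_m):m\in\mathcal M\}>0.$$ Then there exists $U>0$ such that for every $u\in[0,U]$ there is a measure $\rho^{(u)}_*\in\mathcal H^+$ with $u\nu=F_{\rho^{(u)}_*}\cdot\rho^{(u)}_*$, i.e. $\rho^{(u)}_*$ is a finite equilibrium of the equation $\rho_t=\rho_0+ut\nu-\int_0^tD\rho_s\,ds$.
   Context: $\mathcal M$ is a complete separable metric space; $\mathcal G$ the finite integer-valued Borel measures on $\mathcal M$; $\mathcal H^+$ the finite nonnegative Borel measures on $\mathcal M$. $\|\cdot\|_{\mathrm{Was}}$ is the Wasserstein norm $\sup\{|\int f d\pi|:\|f\|_{\mathrm{Lip}}\le1\}$ with $\|f\|_{\mathrm{Lip}}=\sup|f|+\sup_{x\ne y}|f(x)-f(y)|/d(x,y)$. $X^\pi$ is a Poisson random measure with intensity $\pi$, $F_\pi(x):=\mathbb E[S(X^\pi+\delta_x)-S(X^\pi)]$, $F_\pi\cdot\pi$ denotes the measure with density $F_\pi$ with respect to $\pi$, and $D\pi:=F_\pi\cdot\pi$. *)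

theory Defs
  imports "HOL-Analysis.Analysis" "HOL-Library.Multiset"
begin

text \<open>Elements of the space G of finite (nonnegative) integer-valued Borel measures on
  the Polish space 'm are represented as finite multisets of points:
  g corresponds to the sum of the Dirac masses at the points of g.
  The zero measure is the empty multiset, g + h is multiset sum, and the
  Dirac mass at x is the singleton multiset.\<close>

definition lip_norm_le_one :: "('m::metric_space \<Rightarrow> real) \<Rightarrow> bool" where
  "lip_norm_le_one f \<longleftrightarrow>
     bdd_above (range (\<lambda>x. \<bar>f x\<bar>)) \<and>
     bdd_above {\<bar>f x - f y\<bar> / dist x y | x y. x \<noteq> y} \<and>
     Sup (range (\<lambda>x. \<bar>f x\<bar>)) + Sup (insert 0 {\<bar>f x - f y\<bar> / dist x y | x y. x \<noteq> y}) \<le> 1"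

definition mset_integral :: "('m \<Rightarrow> real) \<Rightarrow> 'm multiset \<Rightarrow> real" where
  "mset_integral f g = sum_mset (image_mset f g)"

definition was_dist :: "'m::metric_space multiset \<Rightarrow> 'm multiset \<Rightarrow> real" where
  "was_dist g h = Sup {\<bar>mset_integral f g - mset_integral f h\<bar> | f. lip_norm_le_one f}"

text \<open>Expectation of Phi(X) where X is a Poisson random measure with finite intensity pi:
  the total number of points is Poisson(pi(M)) and, given the number n, the points are
  i.i.d. with law pi / pi(M).\<close>
definition poisson_expectation :: "'m measure \<Rightarrow> ('m multiset \<Rightarrow> real) \<Rightarrow> real" where
  "poisson_expectation \<pi> \<Phi> =
     exp (- measure \<pi> (space \<pi>)) *
     (\<Sum>n. (\<integral>x. \<Phi> (mset (map x [0..<n])) \<partial>(PiM {..<n} (\<lambda>_. \<pi>))) / fact n)"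

definition F_fun :: "('m multiset \<Rightarrow> real) \<Rightarrow> 'm measure \<Rightarrow> 'm \<Rightarrow> real" where
  "F_fun S \<pi> x = poisson_expectation \<pi> (\<lambda>X. S (X + {#x#}) - S X)"

end

(* Look for the equilibrium in the form rho = h nu with h continuous and 0 <= h <= 1; then
   u nu = F_rho rho says exactly h(x) F_{h nu}(x) = u, i.e. h is a fixed point of h |-> u / F_{h nu}.
   The empty configuration alone contributes exp(-rho(M)) S(delta_x) to F_rho(x), so
   F_{h nu} >= exp(-nu(M)) inf_m S(delta_m) =: m > 0 uniformly in h.  Expanding the Poisson
   expectation in the number n of points, the n-th term of F_{h nu} integrates against the product
   density h(y_1)...h(y_n), which moves by at most n sup|h - h'|; hence F_{h nu}(x) is Lipschitz in h
   for the sup norm with a constant C depending only on K and nu(M), while F_rho is K-Lipschitz in x.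
   For u <= m^2 / (2C + m) the map h |-> u / F_{h nu} therefore sends the continuous [0,1]-valued
   functions into themselves and is a 1/2-contraction, and Banach's fixed point theorem gives h. *)

theory Submission
  imports Defs
begin

section \<open>Wasserstein distance of finite configurations\<close>

lemma lip_norm_le_oneD:
  fixes f :: "'m::metric_space \<Rightarrow> real"
  assumes "lip_norm_le_one f"
  shows "\<bar>f x\<bar> \<le> 1" and "\<bar>f x - f y\<bar> \<le> dist x y"
proof -
  let ?a = "Sup (range (\<lambda>x. \<bar>f x\<bar>))"
  let ?Q = "{\<bar>f x - f y\<bar> / dist x y | x y. x \<noteq> y}"
  let ?b = "Sup (insert 0 ?Q)"
  have bdd: "bdd_above (range (\<lambda>x. \<bar>f x\<bar>))" "bdd_above (insert 0 ?Q)" and sum: "?a + ?b \<le> 1"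
    using assms unfolding lip_norm_le_one_def by auto
  have a: "\<bar>f z\<bar> \<le> ?a" for z by (rule cSup_upper[OF _ bdd(1)]) auto
  have b: "q \<in> insert 0 ?Q \<Longrightarrow> q \<le> ?b" for q by (rule cSup_upper[OF _ bdd(2)])
  show "\<bar>f x\<bar> \<le> 1" using a[of x] b[of 0] sum by simp
  show "\<bar>f x - f y\<bar> \<le> dist x y"
  proof (cases "x = y")
    case False
    then have "\<bar>f x - f y\<bar> / dist x y \<le> ?b" by (intro b) blast
    then have "\<bar>f x - f y\<bar> / dist x y \<le> 1" using a[of x] sum by linarith
    then show ?thesis using False by (simp add: divide_le_eq)
  qed simp
qed

lemma lip_norm_le_one_zero: "lip_norm_le_one (\<lambda>_::'m::metric_space. 0::real)"
proof -
  have quotients: "insert 0 {\<bar>(0::real) - 0\<bar> / dist x y | x y::'m. x \<noteq> y} = {0}" by auto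
  show ?thesis unfolding lip_norm_le_one_def by (simp only: quotients) simp
qed

lemma mset_integral_add [simp]: "mset_integral f (A + B) = mset_integral f A + mset_integral f B"
  and mset_integral_add_mset [simp]: "mset_integral f (add_mset x A) = f x + mset_integral f A"
  and mset_integral_empty [simp]: "mset_integral f {#} = 0"
  unfolding mset_integral_def by simp_all

lemma mset_integral_mset_map: "mset_integral f (mset (map y [0..<n])) = (\<Sum>i<n. f (y i))"
  unfolding mset_integral_def by (induction n) auto

lemma abs_mset_integral_le_size:
  assumes "\<And>x. \<bar>f x\<bar> \<le> 1" shows "\<bar>mset_integral f A\<bar> \<le> real (size A)"
proof (induction A)
  case (add x A)
  then show ?case using assms[of x] by (simp add: mset_integral_def)
qed simp

lemma bdd_above_was_dist:
  "bdd_above {\<bar>mset_integral f g - mset_integral f h\<bar> | f. lip_norm_le_one (f::'m::metric_space \<Rightarrow> real)}"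
proof (rule bdd_aboveI)
  fix t assume "t \<in> {\<bar>mset_integral f g - mset_integral f h\<bar> | f. lip_norm_le_one (f::'m \<Rightarrow> real)}"
  then obtain f where f: "lip_norm_le_one f" and t: "t = \<bar>mset_integral f g - mset_integral f h\<bar>" by auto
  have "\<bar>mset_integral f g\<bar> \<le> real (size g)" "\<bar>mset_integral f h\<bar> \<le> real (size h)"
    using lip_norm_le_oneD(1)[OF f] by (auto intro!: abs_mset_integral_le_size)
  then show "t \<le> real (size g) + real (size h)" using t by linarith
qed

lemma was_dist_nonneg: "0 \<le> was_dist (g::'m::metric_space multiset) h"
  unfolding was_dist_def
  by (rule cSup_upper2[OF _ _ bdd_above_was_dist]) (use lip_norm_le_one_zero in \<open>auto simp: mset_integral_def\<close>)

lemma was_dist_le: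
  assumes "\<And>f. lip_norm_le_one (f::'m::metric_space \<Rightarrow> real) \<Longrightarrow> \<bar>mset_integral f g - mset_integral f h\<bar> \<le> D"
  shows "was_dist g h \<le> D"
  unfolding was_dist_def by (rule cSup_least) (use lip_norm_le_one_zero assms in auto)

lemma was_dist_add_single_le: "was_dist (g + {#x#}) (g::'m::metric_space multiset) \<le> 1"
  by (rule was_dist_le) (simp add: lip_norm_le_oneD)

lemma was_dist_add_singles_le: "was_dist (g + {#x#}) (g + {#x'#}) \<le> dist x (x'::'m::metric_space)"
  by (rule was_dist_le) (simp add: lip_norm_le_oneD)

lemma was_dist_mset_map_le:
  "was_dist (mset (map y [0..<n]) + g) (mset (map z [0..<n]) + (g::'m::metric_space multiset))
     \<le> (\<Sum>i<n. dist (y i) (z i))"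
proof (rule was_dist_le)
  fix f :: "'m \<Rightarrow> real" assume f: "lip_norm_le_one f"
  have "\<bar>mset_integral f (mset (map y [0..<n]) + g) - mset_integral f (mset (map z [0..<n]) + g)\<bar>
      = \<bar>\<Sum>i<n. f (y i) - f (z i)\<bar>"
    by (simp only: mset_integral_add mset_integral_mset_map) (simp add: sum_subtractf)
  also have "\<dots> \<le> (\<Sum>i<n. dist (y i) (z i))"
    by (rule order_trans[OF sum_abs sum_mono]) (rule lip_norm_le_oneD(2)[OF f])
  finally show "\<bar>mset_integral f (mset (map y [0..<n]) + g) - mset_integral f (mset (map z [0..<n]) + g)\<bar>
      \<le> (\<Sum>i<n. dist (y i) (z i))" .
qed

section \<open>Poisson expectations\<close>

definition mset_measurable :: "'m measure \<Rightarrow> ('m multiset \<Rightarrow> real) \<Rightarrow> bool" where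
  "mset_measurable M \<Phi> \<longleftrightarrow>
     (\<forall>n. (\<lambda>y. \<Phi> (mset (map y [0..<n]))) \<in> borel_measurable (PiM {..<n} (\<lambda>_. M)))"

lemma mset_measurable_cong_sets:
  assumes "sets M = sets N"
  shows "mset_measurable M \<Phi> \<longleftrightarrow> mset_measurable N \<Phi>"
proof -
  have eq: "borel_measurable (PiM {..<n} (\<lambda>_. M)) = borel_measurable (PiM {..<n} (\<lambda>_. N))" for n
    using assms by (intro measurable_cong_sets sets_PiM_cong) simp_all
  show ?thesis unfolding mset_measurable_def eq ..
qed

lemma mset_measurable_diff:
  "mset_measurable M \<Phi> \<Longrightarrow> mset_measurable M \<Psi> \<Longrightarrow> mset_measurable M (\<lambda>X. \<Phi> X - \<Psi> X)"
  unfolding mset_measurable_def using borel_measurable_diff by blast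

lemma continuous_on_mset_map:
  fixes \<Phi> :: "'m::metric_space multiset \<Rightarrow> real"
  assumes lip: "\<And>y z. \<bar>\<Phi> (mset (map y [0..<n])) - \<Phi> (mset (map z [0..<n]))\<bar> \<le> L * (\<Sum>i<n. dist (y i) (z i))"
  shows "continuous_on UNIV (\<lambda>z::nat \<Rightarrow> 'm. \<Phi> (mset (map z [0..<n])))"
proof -
  have "isCont (\<lambda>z::nat \<Rightarrow> 'm. \<Phi> (mset (map z [0..<n]))) z0" for z0
  proof -
    have "((\<lambda>z::nat \<Rightarrow> 'm. z i) \<longlongrightarrow> z0 i) (at z0)" for i
      using continuous_on_product_coordinates[of i] by (auto simp: continuous_on_def)
    then have "((\<lambda>z. \<Sum>i<n. dist (z i) (z0 i)) \<longlongrightarrow> (\<Sum>i<n. dist (z0 i) (z0 i))) (at z0)"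
      by (intro tendsto_sum tendsto_dist tendsto_const)
    then have "((\<lambda>z. L * (\<Sum>i<n. dist (z i) (z0 i))) \<longlongrightarrow> 0) (at z0)"
      using tendsto_mult_right_zero by fastforce
    then have "((\<lambda>z. \<Phi> (mset (map z [0..<n])) - \<Phi> (mset (map z0 [0..<n]))) \<longlongrightarrow> 0) (at z0)"
      by (rule Lim_null_comparison[rotated]) (use lip in \<open>auto intro!: always_eventually\<close>)
    then show ?thesis unfolding isCont_def by (rule LIM_zero_cancel)
  qed
  then show ?thesis by (simp add: continuous_at_imp_continuous_on)
qed

lemma measurable_restrict_PiM_UNIV:
  assumes "sets M = sets borel"
  shows "(\<lambda>y. y) \<in> measurable (PiM {..<n::nat} (\<lambda>_. M)) (PiM UNIV (\<lambda>_. borel))"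
proof (rule measurable_PiM_single')
  fix i :: nat
  show "(\<lambda>y. y i) \<in> borel_measurable (PiM {..<n} (\<lambda>_. M))"
  proof (cases "i < n")
    case True
    then have "(\<lambda>y. y i) \<in> measurable (PiM {..<n} (\<lambda>_. M)) M"
      by (intro measurable_component_singleton) simp
    then show ?thesis using measurable_cong_sets[OF refl assms] by blast
  next
    case False
    have "(\<lambda>y. undefined) \<in> borel_measurable (PiM {..<n} (\<lambda>_. M))" by simp
    then show ?thesis
      by (rule measurable_cong[THEN iffD1, rotated])
         (use False in \<open>auto simp: space_PiM PiE_def extensional_def\<close>)
  qed
qed auto

lemma mset_measurable_if_lipschitz:
  fixes \<Phi> :: "'m::polish_space multiset \<Rightarrow> real"
  assumes sets: "sets M = sets borel"
    and lip: "\<And>n y z. \<bar>\<Phi> (mset (map y [0..<n])) - \<Phi> (mset (map z [0..<n]))\<bar>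
                \<le> L * (\<Sum>i<n. dist (y i) (z i))"
  shows "mset_measurable M \<Phi>"
  unfolding mset_measurable_def
proof
  fix n
  have PiM_borel: "sets (PiM UNIV (\<lambda>_. borel)) = sets (borel :: (nat \<Rightarrow> 'm) measure)"
    by (rule sets_PiM_equal_borel)
  have "(\<lambda>z::nat \<Rightarrow> 'm. \<Phi> (mset (map z [0..<n]))) \<in> borel_measurable (PiM UNIV (\<lambda>_. borel))"
    using borel_measurable_continuous_onI[OF continuous_on_mset_map[OF lip]]
    by (simp add: measurable_cong_sets[OF PiM_borel refl])
  from measurable_comp[OF measurable_restrict_PiM_UNIV[OF sets] this]
  show "(\<lambda>y. \<Phi> (mset (map y [0..<n]))) \<in> borel_measurable (PiM {..<n} (\<lambda>_. M))"
    by (simp add: comp_def)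
qed

lemma finite_measure_PiM_power:
  assumes "finite_measure \<pi>"
  shows "finite_measure (PiM {..<n} (\<lambda>_. \<pi>))"
    and "measure (PiM {..<n} (\<lambda>_. \<pi>)) (space (PiM {..<n} (\<lambda>_. \<pi>))) = measure \<pi> (space \<pi>) ^ n"
proof -
  interpret finite_measure \<pi> by fact
  interpret product_sigma_finite "\<lambda>_. \<pi>" by standard
  have e: "emeasure (PiM {..<n} (\<lambda>_. \<pi>)) (space (PiM {..<n} (\<lambda>_. \<pi>))) = ennreal (measure \<pi> (space \<pi>) ^ n)"
    unfolding space_PiM by (subst emeasure_PiM) (auto simp: emeasure_eq_measure ennreal_power)
  then show "finite_measure (PiM {..<n} (\<lambda>_. \<pi>))" by (intro finite_measureI) simp
  show "measure (PiM {..<n} (\<lambda>_. \<pi>)) (space (PiM {..<n} (\<lambda>_. \<pi>))) = measure \<pi> (space \<pi>) ^ n"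
    using e by (simp add: measure_def)
qed

lemma bounded_integrable_PiM_power:
  assumes fin: "finite_measure \<pi>"
    and meas: "\<Phi> \<in> borel_measurable (PiM {..<n} (\<lambda>_. \<pi>))"
    and bound: "\<And>y. \<bar>\<Phi> y\<bar> \<le> B"
  shows "integrable (PiM {..<n} (\<lambda>_. \<pi>)) \<Phi>"
    and "\<bar>\<integral>y. \<Phi> y \<partial>PiM {..<n} (\<lambda>_. \<pi>)\<bar> \<le> B * measure \<pi> (space \<pi>) ^ n"
proof -
  interpret P: finite_measure "PiM {..<n} (\<lambda>_. \<pi>)" by (rule finite_measure_PiM_power(1)[OF fin])
  show int: "integrable (PiM {..<n} (\<lambda>_. \<pi>)) \<Phi>"
    by (rule P.integrable_const_bound[where B=B]) (use meas bound in auto)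
  have "\<bar>\<integral>y. \<Phi> y \<partial>PiM {..<n} (\<lambda>_. \<pi>)\<bar> \<le> (\<integral>y. B \<partial>PiM {..<n} (\<lambda>_. \<pi>))"
    by (rule order_trans[OF integral_abs_bound integral_mono]) (use int bound in auto)
  then show "\<bar>\<integral>y. \<Phi> y \<partial>PiM {..<n} (\<lambda>_. \<pi>)\<bar> \<le> B * measure \<pi> (space \<pi>) ^ n"
    using finite_measure_PiM_power(2)[OF fin] by (simp add: mult.commute)
qed

lemma exp_sums_real: "(\<lambda>n. x ^ n / fact n) sums exp (x::real)"
  using exp_converges[of x] by (simp add: divide_inverse mult.commute scaleR_conv_of_real)

definition poisson_term :: "'m measure \<Rightarrow> ('m multiset \<Rightarrow> real) \<Rightarrow> nat \<Rightarrow> real" where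
  "poisson_term \<pi> \<Phi> n = (\<integral>y. \<Phi> (mset (map y [0..<n])) \<partial>PiM {..<n} (\<lambda>_. \<pi>)) / fact n"

lemma poisson_expectation_eq_suminf:
  "poisson_expectation \<pi> \<Phi> = exp (- measure \<pi> (space \<pi>)) * (\<Sum>n. poisson_term \<pi> \<Phi> n)"
  unfolding poisson_expectation_def poisson_term_def ..

lemma poisson_term_summable:
  assumes fin: "finite_measure \<pi>" and meas: "mset_measurable \<pi> \<Phi>" and bound: "\<And>X. \<bar>\<Phi> X\<bar> \<le> B"
  shows "summable (poisson_term \<pi> \<Phi>)"
    and "\<bar>\<Sum>n. poisson_term \<pi> \<Phi> n\<bar> \<le> B * exp (measure \<pi> (space \<pi>))"
proof -
  let ?V = "measure \<pi> (space \<pi>)"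
  have term_le: "\<bar>poisson_term \<pi> \<Phi> n\<bar> \<le> B * ?V ^ n / fact n" for n
    using bounded_integrable_PiM_power(2)[OF fin _ bound] meas
    unfolding poisson_term_def mset_measurable_def by (simp add: divide_right_mono)
  have exp_sums: "(\<lambda>n. B * ?V ^ n / fact n) sums (B * exp ?V)"
    using sums_mult[OF exp_sums_real, of B] by (simp add: mult.assoc)
  have abs_summable: "summable (\<lambda>n. \<bar>poisson_term \<pi> \<Phi> n\<bar>)"
    by (rule summable_comparison_test[OF _ sums_summable[OF exp_sums]]) (use term_le in auto)
  then show "summable (poisson_term \<pi> \<Phi>)" by (rule summable_rabs_cancel)
  have "\<bar>\<Sum>n. poisson_term \<pi> \<Phi> n\<bar> \<le> (\<Sum>n. \<bar>poisson_term \<pi> \<Phi> n\<bar>)"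
    by (rule summable_rabs[OF abs_summable])
  also have "\<dots> \<le> (\<Sum>n. B * ?V ^ n / fact n)"
    by (rule suminf_le[OF term_le abs_summable sums_summable[OF exp_sums]])
  finally show "\<bar>\<Sum>n. poisson_term \<pi> \<Phi> n\<bar> \<le> B * exp ?V"
    using exp_sums by (simp add: sums_iff)
qed

lemma abs_poisson_expectation_le:
  assumes "finite_measure \<pi>" "mset_measurable \<pi> \<Phi>" "\<And>X. \<bar>\<Phi> X\<bar> \<le> B"
  shows "\<bar>poisson_expectation \<pi> \<Phi>\<bar> \<le> B"
proof -
  let ?V = "measure \<pi> (space \<pi>)"
  have "\<bar>poisson_expectation \<pi> \<Phi>\<bar> = exp (- ?V) * \<bar>\<Sum>n. poisson_term \<pi> \<Phi> n\<bar>"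
    unfolding poisson_expectation_eq_suminf by (simp add: abs_mult)
  also have "\<dots> \<le> exp (- ?V) * (B * exp ?V)"
    by (rule mult_left_mono[OF poisson_term_summable(2)[OF assms]]) simp
  finally show ?thesis by (simp add: exp_minus field_simps)
qed

lemma poisson_expectation_diff:
  assumes fin: "finite_measure \<pi>"
    and "mset_measurable \<pi> \<Phi>" "\<And>X. \<bar>\<Phi> X\<bar> \<le> B"
    and "mset_measurable \<pi> \<Psi>" "\<And>X. \<bar>\<Psi> X\<bar> \<le> B'"
  shows "poisson_expectation \<pi> (\<lambda>X. \<Phi> X - \<Psi> X) = poisson_expectation \<pi> \<Phi> - poisson_expectation \<pi> \<Psi>"
proof -
  have int: "integrable (PiM {..<n} (\<lambda>_. \<pi>)) (\<lambda>y. \<Phi> (mset (map y [0..<n])))"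
    "integrable (PiM {..<n} (\<lambda>_. \<pi>)) (\<lambda>y. \<Psi> (mset (map y [0..<n])))" for n
    using assms bounded_integrable_PiM_power(1)[OF fin] unfolding mset_measurable_def by blast+
  have "poisson_term \<pi> (\<lambda>X. \<Phi> X - \<Psi> X) n = poisson_term \<pi> \<Phi> n - poisson_term \<pi> \<Psi> n" for n
    unfolding poisson_term_def Bochner_Integration.integral_diff[OF int] by (rule diff_divide_distrib)
  then have "(\<Sum>n. poisson_term \<pi> (\<lambda>X. \<Phi> X - \<Psi> X) n)
      = (\<Sum>n. poisson_term \<pi> \<Phi> n) - (\<Sum>n. poisson_term \<pi> \<Psi> n)"
    using suminf_diff[OF poisson_term_summable(1)[OF fin assms(2,3)] poisson_term_summable(1)[OF fin assms(4,5)]]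
    by simp
  then show ?thesis unfolding poisson_expectation_eq_suminf by (simp add: right_diff_distrib)
qed

lemma poisson_expectation_ge_empty:
  assumes "finite_measure \<pi>" "mset_measurable \<pi> \<Phi>" "\<And>X. \<bar>\<Phi> X\<bar> \<le> B" and nonneg: "\<And>X. 0 \<le> \<Phi> X"
  shows "exp (- measure \<pi> (space \<pi>)) * \<Phi> {#} \<le> poisson_expectation \<pi> \<Phi>"
proof -
  have "poisson_term \<pi> \<Phi> 0 = \<Phi> {#}"
    unfolding poisson_term_def by (simp add: PiM_empty)
  moreover have "(\<Sum>n<1. poisson_term \<pi> \<Phi> n) \<le> (\<Sum>n. poisson_term \<pi> \<Phi> n)"
    by (rule sum_le_suminf[OF poisson_term_summable(1)[OF assms(1-3)]])
       (auto simp: poisson_term_def nonneg intro!: divide_nonneg_pos integral_nonneg_AE)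
  ultimately show ?thesis unfolding poisson_expectation_eq_suminf by (simp add: mult_left_mono)
qed

section \<open>Poisson expectations under densities bounded by one\<close>

definition unit_density :: "'m measure \<Rightarrow> ('m \<Rightarrow> real) \<Rightarrow> bool" where
  "unit_density \<nu> g \<longleftrightarrow> g \<in> borel_measurable \<nu> \<and> (\<forall>x. g x \<in> {0..1})"

lemma unit_density_finite_measure:
  assumes fin: "finite_measure \<nu>" and g: "unit_density \<nu> g"
  shows "integrable \<nu> g"
    and "finite_measure (density \<nu> g)"
    and "measure (density \<nu> g) (space (density \<nu> g)) = (\<integral>x. g x \<partial>\<nu>)"
    and "measure (density \<nu> g) (space (density \<nu> g)) \<le> measure \<nu> (space \<nu>)"
proof -
  interpret finite_measure \<nu> by fact
  have meas: "g \<in> borel_measurable \<nu>" and range: "\<And>x. 0 \<le> g x" "\<And>x. g x \<le> 1"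
    using g unfolding unit_density_def by auto
  show int: "integrable \<nu> g"
    by (rule integrable_const_bound[where B=1]) (use meas range in auto)
  have "emeasure (density \<nu> g) (space (density \<nu> g)) = ennreal (\<integral>x. g x \<partial>\<nu>)"
    using meas by (simp add: emeasure_density nn_integral_eq_integral[OF int] range)
  then show "finite_measure (density \<nu> g)"
    and mass: "measure (density \<nu> g) (space (density \<nu> g)) = (\<integral>x. g x \<partial>\<nu>)"
    by (auto intro!: finite_measureI simp: measure_def integral_nonneg_AE range)
  have "(\<integral>x. g x \<partial>\<nu>) \<le> (\<integral>x. 1 \<partial>\<nu>)"
    by (rule integral_mono) (use int range in auto)
  then show "measure (density \<nu> g) (space (density \<nu> g)) \<le> measure \<nu> (space \<nu>)"
    unfolding mass by simp
qed

lemma indicator_PiE_eq_prod: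
  assumes "y \<in> extensional I" "finite I"
  shows "(indicator (PiE I A) y :: ennreal) = (\<Prod>i\<in>I. indicator (A i) (y i))"
proof (cases "\<forall>i\<in>I. y i \<in> A i")
  case True
  then have "y \<in> PiE I A" using assms by (auto simp: PiE_def)
  then show ?thesis using True by simp
next
  case False
  then obtain j where j: "j \<in> I" "y j \<notin> A j" by auto
  then have "(\<Prod>i\<in>I. (indicator (A i) (y i) :: ennreal)) = 0"
    using assms(2) by (intro prod_zero bexI[of _ j]) auto
  moreover have "y \<notin> PiE I A" using j by auto
  ultimately show ?thesis by simp
qed

lemma measurable_prod_PiM_power:
  assumes "g \<in> borel_measurable \<nu>"
  shows "(\<lambda>y. \<Prod>i<n. g (y i) :: real) \<in> borel_measurable (PiM {..<n} (\<lambda>_. \<nu>))"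
proof -
  have "(\<lambda>y. g (y i)) \<in> borel_measurable (PiM {..<n} (\<lambda>_. \<nu>))" if "i < n" for i
    by (rule measurable_compose[OF measurable_component_singleton[of i "{..<n}" "\<lambda>_. \<nu>"] assms])
       (use that in simp)
  then show ?thesis by (intro borel_measurable_prod) auto
qed

lemma PiM_density_power:
  assumes fin: "finite_measure \<nu>" and g: "unit_density \<nu> g"
  shows "PiM {..<n::nat} (\<lambda>_. density \<nu> g) = density (PiM {..<n} (\<lambda>_. \<nu>)) (\<lambda>y. \<Prod>i<n. g (y i))"
proof -
  let ?D = "density \<nu> g"
  have meas: "g \<in> borel_measurable \<nu>" and nonneg: "\<And>x. 0 \<le> g x"
    using g unfolding unit_density_def by auto
  interpret D: finite_measure ?D by (rule unit_density_finite_measure(2)[OF fin g])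
  interpret D: product_sigma_finite "\<lambda>_. ?D" by standard
  interpret N: finite_measure \<nu> by fact
  interpret N: product_sigma_finite "\<lambda>_. \<nu>" by standard
  have "density (PiM {..<n} (\<lambda>_. \<nu>)) (\<lambda>y. \<Prod>i<n. g (y i)) = PiM {..<n} (\<lambda>_. ?D)"
  proof (rule D.PiM_eqI)
    show "sets (density (PiM {..<n} (\<lambda>_. \<nu>)) (\<lambda>y. \<Prod>i<n. g (y i))) = sets (PiM {..<n} (\<lambda>_. ?D))"
      unfolding sets_density by (rule sets_PiM_cong) simp_all
  next
    fix A assume "\<And>i. i \<in> {..<n} \<Longrightarrow> A i \<in> sets ?D"
    then have A: "\<And>i. i \<in> {..<n} \<Longrightarrow> A i \<in> sets \<nu>" by simp
    have prod_meas: "(\<lambda>y. ennreal (\<Prod>i<n. g (y i))) \<in> borel_measurable (PiM {..<n} (\<lambda>_. \<nu>))"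
      by (rule measurable_compose[OF measurable_prod_PiM_power[OF meas] measurable_ennreal])
    have "emeasure (density (PiM {..<n} (\<lambda>_. \<nu>)) (\<lambda>y. \<Prod>i<n. g (y i))) (PiE {..<n} A)
        = (\<integral>\<^sup>+y. ennreal (\<Prod>i<n. g (y i)) * indicator (PiE {..<n} A) y \<partial>PiM {..<n} (\<lambda>_. \<nu>))"
      by (rule emeasure_density[OF prod_meas]) (use A in \<open>auto intro!: sets_PiM_I_finite\<close>)
    also have "\<dots> = (\<integral>\<^sup>+y. (\<Prod>i<n. ennreal (g (y i)) * indicator (A i) (y i)) \<partial>PiM {..<n} (\<lambda>_. \<nu>))"
    proof (rule nn_integral_cong)
      fix y assume "y \<in> space (PiM {..<n} (\<lambda>_. \<nu>))"
      then have "y \<in> extensional {..<n}" by (simp add: space_PiM PiE_def)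
      then show "ennreal (\<Prod>i<n. g (y i)) * indicator (PiE {..<n} A) y
          = (\<Prod>i<n. ennreal (g (y i)) * indicator (A i) (y i))"
        by (simp add: indicator_PiE_eq_prod prod.distrib prod_ennreal nonneg)
    qed
    also have "\<dots> = (\<Prod>i<n. \<integral>\<^sup>+x. ennreal (g x) * indicator (A i) x \<partial>\<nu>)"
      by (rule N.product_nn_integral_prod) (use meas A in auto)
    also have "\<dots> = (\<Prod>i<n. emeasure ?D (A i))"
      by (rule prod.cong[OF refl]) (use meas A in \<open>simp add: emeasure_density\<close>)
    finally show "emeasure (density (PiM {..<n} (\<lambda>_. \<nu>)) (\<lambda>y. \<Prod>i<n. g (y i))) (PiE {..<n} A)
        = (\<Prod>i\<in>{..<n}. emeasure ?D (A i))" .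
  qed simp
  then show ?thesis by simp
qed

lemma abs_prod_diff_le:
  fixes a b :: "nat \<Rightarrow> real"
  assumes "\<And>i. a i \<in> {0..1}" "\<And>i. b i \<in> {0..1}" and diff: "\<And>i. \<bar>a i - b i\<bar> \<le> \<delta>"
  shows "\<bar>(\<Prod>i<n. a i) - (\<Prod>i<n. b i)\<bar> \<le> real n * \<delta>"
proof (induction n)
  case (Suc n)
  have a: "\<bar>a n\<bar> \<le> 1" and b: "\<bar>\<Prod>i<n. b i\<bar> \<le> 1"
    using assms by (auto simp: abs_prod prod_le_1)
  have "(\<Prod>i<Suc n. a i) - (\<Prod>i<Suc n. b i)
      = ((\<Prod>i<n. a i) - (\<Prod>i<n. b i)) * a n + (\<Prod>i<n. b i) * (a n - b n)"
    by (simp add: algebra_simps)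
  also have "\<bar>\<dots>\<bar> \<le> \<bar>(\<Prod>i<n. a i) - (\<Prod>i<n. b i)\<bar> * \<bar>a n\<bar> + \<bar>\<Prod>i<n. b i\<bar> * \<bar>a n - b n\<bar>"
    by (metis abs_mult abs_triangle_ineq)
  also have "\<dots> \<le> real n * \<delta> * 1 + 1 * \<delta>"
    using Suc a b diff[of n] by (intro add_mono mult_mono) auto
  finally show ?case by (simp add: algebra_simps)
qed simp

lemma abs_exp_minus_diff_le:
  assumes "0 \<le> (a::real)" "0 \<le> b"
  shows "\<bar>exp (- a) - exp (- b)\<bar> \<le> \<bar>a - b\<bar>"
proof -
  have "exp (- a) - exp (- b) \<le> b - a" if "0 \<le> a" "a \<le> b" for a b :: real
  proof -
    have "exp (- a) * (1 + (a - b)) \<le> exp (- a) * exp (a - b)"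
      by (rule mult_left_mono[OF exp_ge_add_one_self]) simp
    then have "exp (- a) - exp (- b) \<le> exp (- a) * (b - a)"
      by (simp add: algebra_simps flip: exp_add)
    also have "\<dots> \<le> b - a" using that by (simp add: mult_left_le_one_le)
    finally show ?thesis .
  qed
  from this[of a b] this[of b a] show ?thesis using assms by (cases "a \<le> b") auto
qed

lemma poisson_term_density:
  assumes fin: "finite_measure \<nu>" and g: "unit_density \<nu> g" and meas: "mset_measurable \<nu> \<Phi>"
  shows "poisson_term (density \<nu> g) \<Phi> n
    = (\<integral>y. (\<Prod>i<n. g (y i)) * \<Phi> (mset (map y [0..<n])) \<partial>PiM {..<n} (\<lambda>_. \<nu>)) / fact n"
  unfolding poisson_term_def PiM_density_power[OF fin g] using g meas
  by (subst integral_density)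
     (auto simp: unit_density_def mset_measurable_def intro!: prod_nonneg measurable_prod_PiM_power)

lemma borel_measurable_prod_density_times:
  assumes "unit_density \<nu> h" "mset_measurable \<nu> \<Phi>"
  shows "(\<lambda>y. (\<Prod>i<n. h (y i)) * \<Phi> (mset (map y [0..<n]))) \<in> borel_measurable (PiM {..<n} (\<lambda>_. \<nu>))"
  using assms
  by (auto simp: unit_density_def mset_measurable_def intro!: borel_measurable_times measurable_prod_PiM_power)

lemma abs_prod_density_times_le:
  assumes "unit_density \<nu> h" "\<And>X. \<bar>\<Phi> X\<bar> \<le> B"
  shows "\<bar>(\<Prod>i<n. h (y i)) * \<Phi> (mset (map y [0..<n]))\<bar> \<le> B"
proof -
  have "\<bar>\<Prod>i<n. h (y i)\<bar> \<le> 1" using assms(1) by (auto simp: unit_density_def abs_prod prod_le_1)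
  then have "\<bar>\<Prod>i<n. h (y i)\<bar> * \<bar>\<Phi> (mset (map y [0..<n]))\<bar> \<le> 1 * B"
    by (rule mult_mono[OF _ assms(2)]) auto
  then show ?thesis by (simp add: abs_mult)
qed

lemma abs_poisson_term_density_diff_le:
  assumes fin: "finite_measure \<nu>" and g: "unit_density \<nu> g" and g': "unit_density \<nu> g'"
    and diff: "\<And>x. \<bar>g x - g' x\<bar> \<le> \<delta>"
    and meas: "mset_measurable \<nu> \<Phi>" and bound: "\<And>X. \<bar>\<Phi> X\<bar> \<le> B"
  shows "\<bar>poisson_term (density \<nu> g) \<Phi> n - poisson_term (density \<nu> g') \<Phi> n\<bar>
    \<le> \<delta> * B * (2 * measure \<nu> (space \<nu>)) ^ n / fact n"
proof -
  let ?V = "measure \<nu> (space \<nu>)"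
  let ?P = "PiM {..<n} (\<lambda>_. \<nu>)"
  let ?f = "\<lambda>g y. (\<Prod>i<n. g (y i)) * \<Phi> (mset (map y [0..<n]))"
  have "0 \<le> B" "0 \<le> \<delta>" using bound[of "{#}"] diff[of undefined] by linarith+
  have integrable: "integrable ?P (?f h)" if "unit_density \<nu> h" for h
    by (rule bounded_integrable_PiM_power(1)[OF fin borel_measurable_prod_density_times[OF that meas]
          abs_prod_density_times_le[where \<Phi> = \<Phi>, OF that bound]])
  have diff_bound: "\<bar>?f g y - ?f g' y\<bar> \<le> real n * \<delta> * B" for y
  proof -
    have "\<bar>?f g y - ?f g' y\<bar> = \<bar>(\<Prod>i<n. g (y i)) - (\<Prod>i<n. g' (y i))\<bar> * \<bar>\<Phi> (mset (map y [0..<n]))\<bar>"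
      by (simp add: abs_mult[symmetric] left_diff_distrib)
    also have "\<dots> \<le> (real n * \<delta>) * B"
      using abs_prod_diff_le[of "\<lambda>i. g (y i)" "\<lambda>i. g' (y i)" \<delta> n] g g' diff bound \<open>0 \<le> B\<close>
      by (intro mult_mono) (auto simp: unit_density_def)
    finally show ?thesis .
  qed
  have "poisson_term (density \<nu> g) \<Phi> n - poisson_term (density \<nu> g') \<Phi> n
      = (\<integral>y. ?f g y - ?f g' y \<partial>?P) / fact n"
    unfolding poisson_term_density[OF fin g meas] poisson_term_density[OF fin g' meas]
      Bochner_Integration.integral_diff[OF integrable[OF g] integrable[OF g']]
    by (rule diff_divide_distrib[symmetric])
  also have "\<bar>\<dots>\<bar> \<le> real n * \<delta> * B * ?V ^ n / fact n"
    using bounded_integrable_PiM_power(2)[OF fin _ diff_bound]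
      borel_measurable_prod_density_times[OF g meas] borel_measurable_prod_density_times[OF g' meas]
    by (simp add: divide_right_mono)
  \<comment> \<open>\<open>n \<le> 2 ^ n\<close> turns the bounds into the terms of an exponential series.\<close>
  also have "\<dots> \<le> 2 ^ n * \<delta> * B * ?V ^ n / fact n"
    using \<open>0 \<le> B\<close> \<open>0 \<le> \<delta>\<close> of_nat_less_two_power[of n]
    by (intro divide_right_mono mult_right_mono) auto
  finally show ?thesis by (simp add: power_mult_distrib mult_ac)
qed

lemma abs_measure_density_diff_le:
  assumes fin: "finite_measure \<nu>" and g: "unit_density \<nu> g" and g': "unit_density \<nu> g'"
    and diff: "\<And>x. \<bar>g x - g' x\<bar> \<le> \<delta>"
  shows "\<bar>measure (density \<nu> g) (space (density \<nu> g)) - measure (density \<nu> g') (space (density \<nu> g'))\<bar>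
    \<le> \<delta> * measure \<nu> (space \<nu>)"
proof -
  note fin_g = unit_density_finite_measure[OF fin g] and fin_g' = unit_density_finite_measure[OF fin g']
  have "\<bar>measure (density \<nu> g) (space (density \<nu> g)) - measure (density \<nu> g') (space (density \<nu> g'))\<bar>
      = \<bar>\<integral>x. g x - g' x \<partial>\<nu>\<bar>"
    unfolding fin_g(3) fin_g'(3) using fin_g(1) fin_g'(1) by simp
  also have "\<dots> \<le> (\<integral>x. \<delta> \<partial>\<nu>)"
    by (rule order_trans[OF integral_abs_bound integral_mono])
       (use fin_g(1) fin_g'(1) diff finite_measure.integrable_const[OF fin] in auto)
  finally show ?thesis using fin by (simp add: finite_measure.emeasure_eq_measure mult.commute)
qed

lemma abs_suminf_poisson_term_density_diff_le:
  assumes fin: "finite_measure \<nu>" and g: "unit_density \<nu> g" and g': "unit_density \<nu> g'"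
    and diff: "\<And>x. \<bar>g x - g' x\<bar> \<le> \<delta>"
    and meas: "mset_measurable \<nu> \<Phi>" and bound: "\<And>X. \<bar>\<Phi> X\<bar> \<le> B"
  shows "\<bar>(\<Sum>n. poisson_term (density \<nu> g) \<Phi> n) - (\<Sum>n. poisson_term (density \<nu> g') \<Phi> n)\<bar>
    \<le> \<delta> * B * exp (2 * measure \<nu> (space \<nu>))"
proof -
  let ?V = "measure \<nu> (space \<nu>)"
  let ?t = "poisson_term (density \<nu> g) \<Phi>" and ?t' = "poisson_term (density \<nu> g') \<Phi>"
  have meas_density: "mset_measurable (density \<nu> h) \<Phi>" for h
    using meas mset_measurable_cong_sets[of "density \<nu> h" \<nu>] by simp
  have exp_sums: "(\<lambda>n. \<delta> * B * (2 * ?V) ^ n / fact n) sums (\<delta> * B * exp (2 * ?V))"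
    using sums_mult[OF exp_sums_real[of "2 * ?V"], of "\<delta> * B"] by (simp add: mult.assoc)
  note term_diff = abs_poisson_term_density_diff_le[OF fin g g' diff meas bound]
  then have diff_summable: "summable (\<lambda>n. \<bar>?t n - ?t' n\<bar>)"
    by (intro summable_comparison_test[OF _ sums_summable[OF exp_sums]]) auto
  have "\<bar>suminf ?t - suminf ?t'\<bar> = \<bar>\<Sum>n. ?t n - ?t' n\<bar>"
    using suminf_diff[OF poisson_term_summable(1)[OF unit_density_finite_measure(2)[OF fin g] meas_density bound]
        poisson_term_summable(1)[OF unit_density_finite_measure(2)[OF fin g'] meas_density bound]]
    by simp
  also have "\<dots> \<le> (\<Sum>n. \<bar>?t n - ?t' n\<bar>)" by (rule summable_rabs[OF diff_summable])
  also have "\<dots> \<le> \<delta> * B * exp (2 * ?V)"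
    using suminf_le[OF term_diff diff_summable sums_summable[OF exp_sums]] exp_sums by (simp add: sums_iff)
  finally show ?thesis .
qed

lemma abs_poisson_expectation_density_diff_le:
  assumes fin: "finite_measure \<nu>" and g: "unit_density \<nu> g" and g': "unit_density \<nu> g'"
    and diff: "\<And>x. \<bar>g x - g' x\<bar> \<le> \<delta>"
    and meas: "mset_measurable \<nu> \<Phi>" and bound: "\<And>X. \<bar>\<Phi> X\<bar> \<le> B"
  shows "\<bar>poisson_expectation (density \<nu> g) \<Phi> - poisson_expectation (density \<nu> g') \<Phi>\<bar>
    \<le> \<delta> * B * (measure \<nu> (space \<nu>) * exp (measure \<nu> (space \<nu>)) + exp (2 * measure \<nu> (space \<nu>)))"
proof -
  let ?V = "measure \<nu> (space \<nu>)"
  define a where "a = measure (density \<nu> g) (space (density \<nu> g))"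
  define a' where "a' = measure (density \<nu> g') (space (density \<nu> g'))"
  define t where "t = poisson_term (density \<nu> g) \<Phi>"
  define t' where "t' = poisson_term (density \<nu> g') \<Phi>"
  have "0 \<le> B" using bound[of "{#}"] by linarith
  have "a \<le> ?V" "0 \<le> a'"
    using unit_density_finite_measure(4)[OF fin g] by (simp_all add: a_def a'_def)
  have "\<bar>suminf t\<bar> \<le> B * exp a"
    unfolding t_def a_def using meas mset_measurable_cong_sets[of "density \<nu> g" \<nu>]
    by (intro poisson_term_summable(2)[OF unit_density_finite_measure(2)[OF fin g] _ bound]) simp
  also have "\<dots> \<le> B * exp ?V" using \<open>a \<le> ?V\<close> \<open>0 \<le> B\<close> by (intro mult_left_mono) auto
  finally have sum_bound: "\<bar>suminf t\<bar> \<le> B * exp ?V" .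
  have "poisson_expectation (density \<nu> g) \<Phi> - poisson_expectation (density \<nu> g') \<Phi>
      = (exp (- a) - exp (- a')) * suminf t + exp (- a') * (suminf t - suminf t')"
    unfolding poisson_expectation_eq_suminf a_def a'_def t_def t'_def by (simp add: algebra_simps)
  also have "\<bar>\<dots>\<bar> \<le> \<bar>exp (- a) - exp (- a')\<bar> * \<bar>suminf t\<bar> + exp (- a') * \<bar>suminf t - suminf t'\<bar>"
    by (rule order_trans[OF abs_triangle_ineq]) (simp add: abs_mult)
  also have "\<dots> \<le> (\<delta> * ?V) * (B * exp ?V) + 1 * (\<delta> * B * exp (2 * ?V))"
    using abs_exp_minus_diff_le[of a a'] abs_measure_density_diff_le[OF fin g g' diff] sum_bound
      abs_suminf_poisson_term_density_diff_le[OF assms] \<open>0 \<le> a'\<close>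
    by (intro add_mono mult_mono) (auto simp: a_def a'_def t_def t'_def)
  finally show ?thesis by (simp add: algebra_simps)
qed

section \<open>The fixed point equation\<close>

lemma abs_divide_diff_le_half:
  fixes a b m u C d :: real
  assumes "0 < m" "m \<le> a" "m \<le> b" "0 \<le> u" "0 \<le> d"
    and "\<bar>a - b\<bar> \<le> C * d" "2 * u * C \<le> m\<^sup>2"
  shows "\<bar>u / a - u / b\<bar> \<le> d / 2"
proof -
  have "u / a - u / b = u * (b - a) / (a * b)" using assms by (simp add: field_simps)
  then have "\<bar>u / a - u / b\<bar> = u * \<bar>a - b\<bar> / (a * b)"
    using assms by (simp add: abs_mult abs_divide abs_minus_commute)
  also have "\<dots> \<le> u * (C * d) / (m * m)"
    using assms by (intro frac_le mult_left_mono mult_mono) auto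
  also have "\<dots> \<le> d / 2"
    using mult_right_mono[OF assms(7,5)] \<open>0 < m\<close> by (simp add: field_simps power2_eq_square)
  finally show ?thesis .
qed

lemma Bcontfun_divide:
  fixes f :: "'a::topological_space \<Rightarrow> real"
  assumes "continuous_on UNIV f" "\<And>x. m \<le> f x" "0 < m" "0 \<le> u" "u \<le> m"
  shows "apply_bcontfun (Bcontfun (\<lambda>x. u / f x)) = (\<lambda>x. u / f x)" and "u / f x \<in> {0..1}"
proof -
  have "0 < f x" for x using assms(2)[of x] \<open>0 < m\<close> by linarith
  show range: "u / f x \<in> {0..1}" for x
    using assms(2)[of x] assms(4,5) \<open>\<And>x. 0 < f x\<close>[of x] by auto
  have "(\<lambda>x. u / f x) \<in> bcontfun"
  proof (rule bcontfun_normI[where b=1])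
    show "continuous_on UNIV (\<lambda>x. u / f x)"
      using \<open>\<And>x. 0 < f x\<close> by (intro continuous_on_divide continuous_on_const assms(1)) (simp add: less_imp_neq[symmetric])
    show "norm (u / f x) \<le> 1" for x using range[of x] by auto
  qed
  then show "apply_bcontfun (Bcontfun (\<lambda>x. u / f x)) = (\<lambda>x. u / f x)" by (rule Bcontfun_inverse)
qed

lemma reciprocal_fixed_point:
  fixes G :: "('a::metric_space \<Rightarrow> real) \<Rightarrow> 'a \<Rightarrow> real"
  defines "B \<equiv> PiC UNIV (\<lambda>_. {0..1}) :: ('a \<Rightarrow>\<^sub>C real) set"
  assumes cont: "\<And>g. g \<in> B \<Longrightarrow> continuous_on UNIV (G g)"
    and lower: "\<And>g x. g \<in> B \<Longrightarrow> m \<le> G g x"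
    and perturb: "\<And>g g' \<delta> x. g \<in> B \<Longrightarrow> g' \<in> B \<Longrightarrow> (\<And>y. \<bar>g y - g' y\<bar> \<le> \<delta>) \<Longrightarrow>
                    \<bar>G g x - G g' x\<bar> \<le> C * \<delta>"
    and "0 < m" and u: "0 \<le> u" "u \<le> m" "2 * u * C \<le> m\<^sup>2"
  shows "\<exists>h\<in>B. \<forall>x. h x * G h x = u"
proof -
  have mem_B: "g \<in> B \<longleftrightarrow> (\<forall>x. g x \<in> {0..1})" for g by (simp add: B_def mem_PiC_iff Pi_iff)
  define T where "T g = Bcontfun (\<lambda>x. u / G g x)" for g :: "'a \<Rightarrow>\<^sub>C real"
  note T_props = Bcontfun_divide[OF cont lower \<open>0 < m\<close> u(1,2)]
  have T_apply: "apply_bcontfun (T g) = (\<lambda>x. u / G g x)" if "g \<in> B" for g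
    unfolding T_def by (rule T_props(1)[OF that that])
  have T_maps: "T ` B \<subseteq> B" using T_apply T_props(2) by (auto simp: mem_B)
  have T_contraction: "dist (T g) (T g') \<le> 1/2 * dist g g'" if "g \<in> B" "g' \<in> B" for g g'
  proof (rule dist_bound)
    fix x
    have "\<bar>G g x - G g' x\<bar> \<le> C * dist g g'"
      using perturb[OF that] dist_bounded[of g _ g'] by (simp add: dist_real_def)
    then show "dist (T g x) (T g' x) \<le> 1/2 * dist g g'"
      using abs_divide_diff_le_half[OF \<open>0 < m\<close> lower[OF that(1)] lower[OF that(2)] u(1) zero_le_dist _ u(3)]
        T_apply that by (simp add: dist_real_def)
  qed
  have "complete B" unfolding B_def by (intro complete_eq_closed[THEN iffD2] closed_PiC) auto
  moreover have "0 \<in> B" by (simp add: mem_B)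
  ultimately have "\<exists>!h\<in>B. T h = h"
    by (intro Banach_fix[OF _ _ _ _ T_maps T_contraction]) auto
  then obtain h where "h \<in> B" "T h = h" by blast
  have "h x * G h x = u" for x
  proof -
    have "h x = u / G h x" using T_apply[OF \<open>h \<in> B\<close>] \<open>T h = h\<close> by metis
    moreover have "G h x \<noteq> 0" using lower[OF \<open>h \<in> B\<close>, of x] \<open>0 < m\<close> by linarith
    ultimately show ?thesis by (metis nonzero_eq_divide_eq)
  qed
  then show ?thesis using \<open>h \<in> B\<close> by blast
qed

lemma nn_set_integral_density_eq_cmult:
  fixes h f :: "'a \<Rightarrow> real"
  assumes "h \<in> borel_measurable M" "f \<in> borel_measurable M" "\<And>x. 0 \<le> h x" "\<And>x. 0 \<le> f x"
    and "\<And>x. h x * f x = u" "A \<in> sets M"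
  shows "(\<integral>\<^sup>+x\<in>A. ennreal (f x) \<partial>density M h) = ennreal u * emeasure M A"
proof -
  have "(\<integral>\<^sup>+x\<in>A. ennreal (f x) \<partial>density M h) = (\<integral>\<^sup>+x. ennreal (h x) * (ennreal (f x) * indicator A x) \<partial>M)"
    using assms by (intro nn_integral_density) auto
  also have "\<dots> = (\<integral>\<^sup>+x. ennreal u * indicator A x \<partial>M)"
    using assms by (intro nn_integral_cong) (simp add: ennreal_mult'' mult.assoc[symmetric] flip: ennreal_mult)
  also have "\<dots> = ennreal u * emeasure M A" by (rule nn_integral_cmult_indicator[OF assms(6)])
  finally show ?thesis .
qed

lemma unit_density_PiC:
  fixes g :: "'a::topological_space \<Rightarrow>\<^sub>C real"
  assumes "sets \<nu> = sets borel" "g \<in> PiC UNIV (\<lambda>_. {0..1})"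
  shows "unit_density \<nu> g"
  using assms borel_measurable_continuous_onI[of g] measurable_cong_sets[OF assms(1) refl]
  by (auto simp: unit_density_def mem_PiC_iff Pi_iff)

section \<open>The mean increment F\<close>

locale monotone_lipschitz_functional =
  fixes S :: "'m::polish_space multiset \<Rightarrow> real" and K :: real
  assumes S_empty: "S {#} = 0"
    and S_mono: "\<And>g h. S g \<le> S (g + h)"
    and S_lipschitz: "\<And>g h. \<bar>S g - S h\<bar> \<le> K * was_dist g h"
    and K_nonneg: "0 \<le> K"
begin

definition increment :: "'m \<Rightarrow> 'm multiset \<Rightarrow> real" where
  "increment x X = S (X + {#x#}) - S X"

lemma F_fun_eq: "F_fun S \<pi> x = poisson_expectation \<pi> (increment x)"
  unfolding F_fun_def increment_def ..

lemma abs_S_diff_le: "was_dist g h \<le> D \<Longrightarrow> \<bar>S g - S h\<bar> \<le> K * D"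
  using S_lipschitz[of g h] mult_left_mono[OF _ K_nonneg, of "was_dist g h" D] by linarith

lemma increment_nonneg: "0 \<le> increment x X"
  unfolding increment_def using S_mono[of X "{#x#}"] by simp

lemma abs_increment_le: "\<bar>increment x X\<bar> \<le> K"
  unfolding increment_def using abs_S_diff_le[OF was_dist_add_single_le] by simp

lemma abs_increment_diff_le: "\<bar>increment x X - increment x' X\<bar> \<le> K * dist x x'"
  unfolding increment_def using abs_S_diff_le[OF was_dist_add_singles_le] by simp

lemma mset_measurable_increment:
  assumes "sets \<pi> = sets borel"
  shows "mset_measurable \<pi> (increment x)"
proof (rule mset_measurable_if_lipschitz[OF assms, where L = "2 * K"])
  fix n and y z :: "nat \<Rightarrow> 'm"
  have "\<bar>S (mset (map y [0..<n]) + g) - S (mset (map z [0..<n]) + g)\<bar> \<le> K * (\<Sum>i<n. dist (y i) (z i))" for g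
    by (rule abs_S_diff_le[OF was_dist_mset_map_le])
  from this[of "{#x#}"] this[of "{#}"]
  show "\<bar>increment x (mset (map y [0..<n])) - increment x (mset (map z [0..<n]))\<bar>
      \<le> 2 * K * (\<Sum>i<n. dist (y i) (z i))"
    unfolding increment_def by simp
qed

lemma F_fun_ge:
  assumes "sets \<pi> = sets borel" "finite_measure \<pi>"
  shows "exp (- measure \<pi> (space \<pi>)) * S {#x#} \<le> F_fun S \<pi> x"
proof -
  have "exp (- measure \<pi> (space \<pi>)) * increment x {#} \<le> poisson_expectation \<pi> (increment x)"
    by (rule poisson_expectation_ge_empty[OF assms(2) mset_measurable_increment[OF assms(1)]])
       (rule abs_increment_le increment_nonneg)+
  then show ?thesis unfolding F_fun_eq by (simp add: increment_def S_empty)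
qed

lemma F_fun_nonneg:
  assumes "sets \<pi> = sets borel" "finite_measure \<pi>"
  shows "0 \<le> F_fun S \<pi> x"
proof -
  have "0 \<le> S {#x#}" using S_mono[of "{#}" "{#x#}"] S_empty by simp
  then show ?thesis using F_fun_ge[OF assms, of x] by (meson exp_ge_zero mult_nonneg_nonneg order_trans)
qed

lemma continuous_on_F_fun:
  assumes "sets \<pi> = sets borel" "finite_measure \<pi>"
  shows "continuous_on UNIV (F_fun S \<pi>)"
proof -
  have "\<bar>F_fun S \<pi> x - F_fun S \<pi> x'\<bar> \<le> K * dist x x'" for x x'
  proof -
    have "F_fun S \<pi> x - F_fun S \<pi> x' = poisson_expectation \<pi> (\<lambda>X. increment x X - increment x' X)"
      unfolding F_fun_eq using mset_measurable_increment[OF assms(1)] abs_increment_le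
      by (intro poisson_expectation_diff[OF assms(2), symmetric])
    also have "\<bar>\<dots>\<bar> \<le> K * dist x x'"
      using mset_measurable_increment[OF assms(1)] abs_increment_diff_le
      by (intro abs_poisson_expectation_le[OF assms(2)] mset_measurable_diff)
    finally show ?thesis .
  qed
  then have "K-lipschitz_on UNIV (F_fun S \<pi>)"
    by (intro lipschitz_onI) (auto simp: dist_real_def K_nonneg)
  then show ?thesis by (rule lipschitz_on_continuous_on)
qed

lemma abs_F_fun_density_diff_le:
  assumes "sets \<nu> = sets borel" "finite_measure \<nu>"
    and "unit_density \<nu> g" "unit_density \<nu> g'" "\<And>x. \<bar>g x - g' x\<bar> \<le> \<delta>"
  shows "\<bar>F_fun S (density \<nu> g) x - F_fun S (density \<nu> g') x\<bar>
    \<le> \<delta> * (K * (measure \<nu> (space \<nu>) * exp (measure \<nu> (space \<nu>)) + exp (2 * measure \<nu> (space \<nu>))))"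
  using abs_poisson_expectation_density_diff_le[OF assms(2-5) mset_measurable_increment[OF assms(1)]
      abs_increment_le]
  unfolding F_fun_eq by (simp add: algebra_simps)

lemma density_fixed_point_exists:
  assumes nu_sets: "sets \<nu> = sets borel" and nu_finite: "finite_measure \<nu>"
    and "0 < c" and S_single: "\<And>x. c \<le> S {#x#}"
  shows "\<exists>U>0. \<forall>u\<in>{0..U}. \<exists>h\<in>PiC UNIV (\<lambda>_. {0..1}).
    \<forall>x. h x * F_fun S (density \<nu> (\<lambda>y. ennreal (h y))) x = u"
proof -
  define V where "V = measure \<nu> (space \<nu>)"
  define m where "m = exp (- V) * c"
  define C where "C = K * (V * exp V + exp (2 * V))"
  \<comment> \<open>\<open>U \<le> m\<close> keeps \<open>u / F\<close> in \<open>[0,1]\<close>; \<open>2 U C \<le> m\<^sup>2\<close> makes \<open>h \<mapsto> u / F\<close> a \<open>1/2\<close>-contraction.\<close>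
  define U where "U = m\<^sup>2 / (2 * C + m)"
  have "0 < m" "0 \<le> C" using \<open>0 < c\<close> K_nonneg by (simp_all add: m_def C_def V_def)
  then have "0 < U" "U \<le> m" "2 * U * C \<le> m\<^sup>2" by (auto simp: U_def field_simps power2_eq_square)
  have "\<exists>h\<in>PiC UNIV (\<lambda>_. {0..1}). \<forall>x. h x * F_fun S (density \<nu> (\<lambda>y. ennreal (h y))) x = u"
    if "0 \<le> u" "u \<le> U" for u
  proof (rule reciprocal_fixed_point[where G = "\<lambda>g. F_fun S (density \<nu> g)" and m = m and C = C])
    fix g :: "'m \<Rightarrow>\<^sub>C real" and x assume "g \<in> PiC UNIV (\<lambda>_. {0..1})"
    note \<rho> = unit_density_finite_measure(2,4)[OF nu_finite unit_density_PiC[OF nu_sets this]]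
    show "continuous_on UNIV (F_fun S (density \<nu> g))"
      using nu_sets \<rho> by (intro continuous_on_F_fun) auto
    have "m \<le> exp (- measure (density \<nu> g) (space (density \<nu> g))) * S {#x#}"
      unfolding m_def V_def using \<rho>(2) S_single \<open>0 < c\<close> by (intro mult_mono) auto
    also have "\<dots> \<le> F_fun S (density \<nu> g) x"
      using \<rho>(1) nu_sets by (intro F_fun_ge) auto
    finally show "m \<le> F_fun S (density \<nu> g) x" .
  next
    fix g g' :: "'m \<Rightarrow>\<^sub>C real" and \<delta> x
    assume "g \<in> PiC UNIV (\<lambda>_. {0..1})" "g' \<in> PiC UNIV (\<lambda>_. {0..1})" "\<And>y. \<bar>g y - g' y\<bar> \<le> \<delta>"
    then show "\<bar>F_fun S (density \<nu> g) x - F_fun S (density \<nu> g') x\<bar> \<le> C * \<delta>"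
      using abs_F_fun_density_diff_le[OF nu_sets nu_finite unit_density_PiC[OF nu_sets] unit_density_PiC[OF nu_sets]]
      by (simp add: C_def V_def mult.commute)
  next
    show "2 * u * C \<le> m\<^sup>2"
      using \<open>2 * U * C \<le> m\<^sup>2\<close> mult_right_mono[OF \<open>u \<le> U\<close> \<open>0 \<le> C\<close>] by linarith
  qed (use that \<open>0 < m\<close> \<open>U \<le> m\<close> in auto)
  then show ?thesis using \<open>0 < U\<close> by auto
qed

lemma equilibrium_of_fixed_point:
  fixes \<nu> :: "'m measure" and h :: "'m \<Rightarrow>\<^sub>C real"
  defines "\<rho> \<equiv> density \<nu> (\<lambda>y. ennreal (h y))"
  assumes nu_sets: "sets \<nu> = sets borel" and nu_finite: "finite_measure \<nu>"
    and "h \<in> PiC UNIV (\<lambda>_. {0..1})" and fixed: "\<And>x. h x * F_fun S \<rho> x = u"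
  shows "sets \<rho> = sets borel \<and> finite_measure \<rho> \<and>
    (\<forall>A\<in>sets borel. ennreal u * emeasure \<nu> A = (\<integral>\<^sup>+x\<in>A. ennreal (F_fun S \<rho> x) \<partial>\<rho>))"
proof (intro conjI ballI)
  note h = unit_density_PiC[OF nu_sets \<open>h \<in> _\<close>]
  show \<rho>_sets: "sets \<rho> = sets borel" and \<rho>_finite: "finite_measure \<rho>"
    using nu_sets unit_density_finite_measure(2)[OF nu_finite h] by (auto simp: \<rho>_def)
  have "F_fun S \<rho> \<in> borel_measurable \<nu>"
    using borel_measurable_continuous_onI[OF continuous_on_F_fun[OF \<rho>_sets \<rho>_finite]]
    by (simp add: measurable_cong_sets[OF nu_sets refl])
  then show "ennreal u * emeasure \<nu> A = (\<integral>\<^sup>+x\<in>A. ennreal (F_fun S \<rho> x) \<partial>\<rho>)" if "A \<in> sets borel" for A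
    using h fixed F_fun_nonneg[OF \<rho>_sets \<rho>_finite] that nu_sets unfolding \<rho>_def
    by (intro nn_set_integral_density_eq_cmult[symmetric]) (auto simp: unit_density_def)
qed

end

theorem theorem3p1:
  fixes \<nu> :: "'m::polish_space measure"
    and S :: "'m multiset \<Rightarrow> real"
    and K :: real
  assumes nu_sets: "sets \<nu> = sets borel"
    and nu_finite: "finite_measure \<nu>"
    and S_nonneg: "\<And>g. S g \<ge> 0"
    and S_zero: "S {#} = 0"
    and S_mono: "\<And>g h. S g \<le> S (g + h)"
    and S_lip: "\<And>g h. \<bar>S g - S h\<bar> \<le> K * was_dist g h"
    and S_inf: "(INF m. S {#m#}) > 0"
  shows "\<exists>U>0. \<forall>u\<in>{0..U}. \<exists>\<rho>::'m measure.
           sets \<rho> = sets borel \<and> finite_measure \<rho> \<and>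
           (\<forall>A\<in>sets borel.
              ennreal u * emeasure \<nu> A = (\<integral>\<^sup>+x\<in>A. ennreal (F_fun S \<rho> x) \<partial>\<rho>))"
proof -
  define c where "c = (INF m. S {#m#})"
  have S_single: "c \<le> S {#x#}" for x
    unfolding c_def by (rule cINF_lower) (auto intro: bdd_belowI[where m=0] S_nonneg)
  have "0 < \<bar>S {#undefined#} - S {#}\<bar>"
    using S_single[of undefined] S_inf S_zero unfolding c_def by linarith
  then have "0 \<le> K"
    using S_lip[of "{#undefined#}" "{#}"] was_dist_nonneg by (smt (verit) mult_nonpos_nonneg)
  then interpret monotone_lipschitz_functional S K
    using S_zero S_mono S_lip by unfold_locales
  obtain U where "U > 0" and solution: "\<And>u. u \<in> {0..U} \<Longrightarrow> \<exists>h\<in>PiC UNIV (\<lambda>_. {0..1}).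
      \<forall>x. h x * F_fun S (density \<nu> (\<lambda>y. ennreal (h y))) x = u"
    using density_fixed_point_exists[OF nu_sets nu_finite _ S_single] S_inf unfolding c_def by blast
  show ?thesis
  proof (intro exI[of _ U] conjI ballI \<open>U > 0\<close>)
    fix u assume "u \<in> {0..U}"
    with solution obtain h where "h \<in> PiC UNIV (\<lambda>_. {0..1})"
      and "\<And>x. h x * F_fun S (density \<nu> (\<lambda>y. ennreal (h y))) x = u" by blast
    from equilibrium_of_fixed_point[OF nu_sets nu_finite this] show "\<exists>\<rho>. sets \<rho> = sets borel \<and>
        finite_measure \<rho> \<and> (\<forall>A\<in>sets borel. ennreal u * emeasure \<nu> A = (\<integral>\<^sup>+x\<in>A. ennreal (F_fun S \<rho> x) \<partial>\<rho>))"
      by blast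
  qed
qed

end
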